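(* Let $G$ be a topological category and $X$ a topological space with a continuous partial category action by $G$. Suppose $G$ is star open and the action is graph open. Let $Y$ and $i : X\to Y$ be as defined below. Then $i$ is an open map.
   Context: Conventions: $G$ is a small category; objects are identified with their identity morphisms, so ${\rm ob}(G)\subseteq{\rm mor}(G)$; $d(g), c(g)$ are domain and codomain, $G^2=\{(g,h)\mid d(g)=c(h)\}$. $G$ is a topological category if ${\rm mor}(G)$ is a topological space and composition $G^2\to{\rm mor}(G)$ is continuous (with $G^2$ carrying the relative product topology). A partial category action by $G$ on $X$ is a partial function ${\rm mor}(G)\times X\to X$, $(g,x)\mapsto g\cdot x$ where defined, such that: (C1) for every $x$ there is $e\in{\rm ob}(G)$ with $e\cdot x$ defined, and whenever $f\in{\rm ob}(G)$ and $f\cdot x$ is defined, $f\cdot x=x$; (C2) if $g\cdot x$ is defined then $d(g)\cdot x$ is defined; (C3) if $(g,h)\in G^2$ and $h\cdot x$ is defined, then $(gh)\cdot x$ is defined iff $g\cdot(h\cdot x)$ is defined, and then they are equal. It is a continuous partial category action if moreover (CA1) $X_e=\{x\mid e\cdot x\text{ defined}\}$ is open in $X$ for every $e\in{\rm ob}(G)$, and (CA2) the map $(g,x)\mapsto g\cdot x$ is continuous on its domain with the relative product topology. $G$ is star open if $d^{-1}(e) = \{g\in{\rm mor}(G)\mid d(g)=e\}$ is open in ${\rm mor}(G)$ for every $e\in{\rm ob}(G)$. The action is graph open if $\Gamma=\{(g,x)\in{\rm mor}(G)\times X\mid g\cdot x\text{ defined}\}$ is open in ${\rm mor}(G)\times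 X$. Construction: $\overline{X}=\{(g,x)\in{\rm mor}(G)\times X\mid d(g)\cdot x\text{ defined}\}$ with the relative product topology; $(g,x)\sim(g',x')$ if either (i) there is $h\in{\rm mor}(G)$ with $(g',h)\in G^2$, $h\cdot x$ defined, $g=g'h$ and $x'=h\cdot x$, or (ii) $x=x'$, $g,g'\in{\rm ob}(G)$ and both $g\cdot x$, $g'\cdot x'$ defined; $\simeq$ is the equivalence relation generated by $\sim$; $Y=\overline{X}/\simeq$ with the quotient topology, and $[g,x]$ is the class of $(g,x)$; $i : X\to Y$ is $i(x) = [e,x]$ for any $e\in{\rm ob}(G)$ with $e\cdot x$ defined (this is independent of the choice of $e$). *)

theory Defs
  imports "HOL-Analysis.Analysis"
begin

text \<open>A small category with morphism set M, object set Ob (objects are identity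
morphisms, so Ob \<subseteq> M), domain d, codomain c and composition cmp (cmp g h = gh,
defined when d g = c h).\<close>

definition composable :: "'g set \<Rightarrow> ('g \<Rightarrow> 'g) \<Rightarrow> ('g \<Rightarrow> 'g) \<Rightarrow> ('g \<times> 'g) set" where
  "composable M d c = {(g, h). g \<in> M \<and> h \<in> M \<and> d g = c h}"

definition small_category ::
  "'g set \<Rightarrow> 'g set \<Rightarrow> ('g \<Rightarrow> 'g) \<Rightarrow> ('g \<Rightarrow> 'g) \<Rightarrow> ('g \<Rightarrow> 'g \<Rightarrow> 'g) \<Rightarrow> bool" where
  "small_category M Ob d c cmp \<longleftrightarrow>
     Ob \<subseteq> M \<and>
     (\<forall>g\<in>M. d g \<in> Ob \<and> c g \<in> Ob) \<and>
     (\<forall>e\<in>Ob. d e = e \<and> c e = e) \<and>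
     (\<forall>(g, h)\<in>composable M d c. cmp g h \<in> M \<and> d (cmp g h) = d h \<and> c (cmp g h) = c g) \<and>
     (\<forall>f\<in>M. \<forall>g\<in>M. \<forall>h\<in>M. d f = c g \<and> d g = c h \<longrightarrow> cmp (cmp f g) h = cmp f (cmp g h)) \<and>
     (\<forall>g\<in>M. cmp (c g) g = g \<and> cmp g (d g) = g)"

definition topological_category ::
  "'g topology \<Rightarrow> 'g set \<Rightarrow> ('g \<Rightarrow> 'g) \<Rightarrow> ('g \<Rightarrow> 'g) \<Rightarrow> ('g \<Rightarrow> 'g \<Rightarrow> 'g) \<Rightarrow> bool" where
  "topological_category TG Ob d c cmp \<longleftrightarrow>
     small_category (topspace TG) Ob d c cmp \<and>
     continuous_map (subtopology (prod_topology TG TG) (composable (topspace TG) d c)) TG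
       (\<lambda>(g, h). cmp g h)"

definition star_open :: "'g topology \<Rightarrow> 'g set \<Rightarrow> ('g \<Rightarrow> 'g) \<Rightarrow> bool" where
  "star_open TG Ob d \<longleftrightarrow> (\<forall>e\<in>Ob. openin TG {g \<in> topspace TG. d g = e})"

definition act_graph :: "('g \<Rightarrow> 'x \<Rightarrow> 'x option) \<Rightarrow> ('g \<times> 'x) set" where
  "act_graph act = {(g, x). act g x \<noteq> None}"

definition partial_category_action ::
  "'g set \<Rightarrow> 'g set \<Rightarrow> ('g \<Rightarrow> 'g) \<Rightarrow> ('g \<Rightarrow> 'g) \<Rightarrow> ('g \<Rightarrow> 'g \<Rightarrow> 'g) \<Rightarrow> 'x set
     \<Rightarrow> ('g \<Rightarrow> 'x \<Rightarrow> 'x option) \<Rightarrow> bool" where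
  "partial_category_action M Ob d c cmp X act \<longleftrightarrow>
     (\<forall>g x y. act g x = Some y \<longrightarrow> g \<in> M \<and> x \<in> X \<and> y \<in> X) \<and>
     (\<forall>x\<in>X. \<exists>e\<in>Ob. act e x \<noteq> None) \<and>
     (\<forall>f\<in>Ob. \<forall>x. act f x \<noteq> None \<longrightarrow> act f x = Some x) \<and>
     (\<forall>g x. act g x \<noteq> None \<longrightarrow> act (d g) x \<noteq> None) \<and>
     (\<forall>(g, h)\<in>composable M d c. \<forall>x y. act h x = Some y \<longrightarrow> act (cmp g h) x = act g y)"

definition continuous_partial_category_action ::
  "'g topology \<Rightarrow> 'g set \<Rightarrow> ('g \<Rightarrow> 'g) \<Rightarrow> ('g \<Rightarrow> 'g) \<Rightarrow> ('g \<Rightarrow> 'g \<Rightarrow> 'g) \<Rightarrow> 'x topology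
     \<Rightarrow> ('g \<Rightarrow> 'x \<Rightarrow> 'x option) \<Rightarrow> bool" where
  "continuous_partial_category_action TG Ob d c cmp TX act \<longleftrightarrow>
     partial_category_action (topspace TG) Ob d c cmp (topspace TX) act \<and>
     (\<forall>e\<in>Ob. openin TX {x \<in> topspace TX. act e x \<noteq> None}) \<and>
     continuous_map (subtopology (prod_topology TG TX) (act_graph act)) TX
       (\<lambda>(g, x). the (act g x))"

definition graph_open :: "'g topology \<Rightarrow> 'x topology \<Rightarrow> ('g \<Rightarrow> 'x \<Rightarrow> 'x option) \<Rightarrow> bool" where
  "graph_open TG TX act \<longleftrightarrow> openin (prod_topology TG TX) (act_graph act)"

definition Xbar :: "'g set \<Rightarrow> ('g \<Rightarrow> 'g) \<Rightarrow> 'x set \<Rightarrow> ('g \<Rightarrow> 'x \<Rightarrow> 'x option) \<Rightarrow> ('g \<times> 'x) set" where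
  "Xbar M d X act = {(g, x). g \<in> M \<and> x \<in> X \<and> act (d g) x \<noteq> None}"

definition sim_rel ::
  "'g set \<Rightarrow> 'g set \<Rightarrow> ('g \<Rightarrow> 'g) \<Rightarrow> ('g \<Rightarrow> 'g) \<Rightarrow> ('g \<Rightarrow> 'g \<Rightarrow> 'g) \<Rightarrow> 'x set
     \<Rightarrow> ('g \<Rightarrow> 'x \<Rightarrow> 'x option) \<Rightarrow> (('g \<times> 'x) \<times> ('g \<times> 'x)) set" where
  "sim_rel M Ob d c cmp X act =
     {((g, x), (g', x')). (g, x) \<in> Xbar M d X act \<and> (g', x') \<in> Xbar M d X act \<and>
        ((\<exists>h\<in>M. d g' = c h \<and> act h x \<noteq> None \<and> g = cmp g' h \<and> act h x = Some x') \<or>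
         (x = x' \<and> g \<in> Ob \<and> g' \<in> Ob \<and> act g x \<noteq> None \<and> act g' x' \<noteq> None))}"

definition simeq_rel ::
  "'g set \<Rightarrow> 'g set \<Rightarrow> ('g \<Rightarrow> 'g) \<Rightarrow> ('g \<Rightarrow> 'g) \<Rightarrow> ('g \<Rightarrow> 'g \<Rightarrow> 'g) \<Rightarrow> 'x set
     \<Rightarrow> ('g \<Rightarrow> 'x \<Rightarrow> 'x option) \<Rightarrow> (('g \<times> 'x) \<times> ('g \<times> 'x)) set" where
  "simeq_rel M Ob d c cmp X act =
     ((sim_rel M Ob d c cmp X act \<union> (sim_rel M Ob d c cmp X act)\<inverse>)\<^sup>*)
       \<inter> (Xbar M d X act \<times> Xbar M d X act)"

definition quotient_topology :: "'a topology \<Rightarrow> ('a \<times> 'a) set \<Rightarrow> 'a set topology" where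
  "quotient_topology T R =
     topology (\<lambda>U. U \<subseteq> topspace T // R \<and> openin T {x \<in> topspace T. R `` {x} \<in> U})"

definition Ytop ::
  "'g topology \<Rightarrow> 'g set \<Rightarrow> ('g \<Rightarrow> 'g) \<Rightarrow> ('g \<Rightarrow> 'g) \<Rightarrow> ('g \<Rightarrow> 'g \<Rightarrow> 'g) \<Rightarrow> 'x topology
     \<Rightarrow> ('g \<Rightarrow> 'x \<Rightarrow> 'x option) \<Rightarrow> ('g \<times> 'x) set topology" where
  "Ytop TG Ob d c cmp TX act =
     quotient_topology (subtopology (prod_topology TG TX) (Xbar (topspace TG) d (topspace TX) act))
       (simeq_rel (topspace TG) Ob d c cmp (topspace TX) act)"

definition imap ::
  "'g set \<Rightarrow> 'g set \<Rightarrow> ('g \<Rightarrow> 'g) \<Rightarrow> ('g \<Rightarrow> 'g) \<Rightarrow> ('g \<Rightarrow> 'g \<Rightarrow> 'g) \<Rightarrow> 'x set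
     \<Rightarrow> ('g \<Rightarrow> 'x \<Rightarrow> 'x option) \<Rightarrow> 'x \<Rightarrow> ('g \<times> 'x) set" where
  "imap M Ob d c cmp X act x =
     simeq_rel M Ob d c cmp X act `` {(SOME e. e \<in> Ob \<and> act e x \<noteq> None, x)}"

end

theory Submission
  imports Defs
begin

text \<open>For an open set U \<subseteq> X, the saturated preimage of i(U) in Xbar is the set of
  pairs (g, x) with g \<cdot> x defined and g \<cdot> x \<in> U. Indeed, the partially defined value
  g \<cdot> x is constant on \<simeq>-classes, and whenever g \<cdot> x = u the pair (g, x) is
  equivalent to (c g, u) and hence to (e, u), a representative of i(u). That set is the
  preimage of U under the continuous action map on the graph \<Gamma>, so it is open in \<Gamma>,
  hence in mor(G) \<times> X because \<Gamma> is open.\<close>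

lemma openin_quotient_topology:
  "openin (quotient_topology T R) U \<longleftrightarrow>
     U \<subseteq> topspace T // R \<and> openin T {x \<in> topspace T. R `` {x} \<in> U}"
proof -
  have "istopology (\<lambda>U. U \<subseteq> topspace T // R \<and> openin T {x \<in> topspace T. R `` {x} \<in> U})"
  proof -
    have "{x \<in> topspace T. R `` {x} \<in> S \<inter> S'} =
        {x \<in> topspace T. R `` {x} \<in> S} \<inter> {x \<in> topspace T. R `` {x} \<in> S'}" for S S'
      by auto
    moreover have "{x \<in> topspace T. R `` {x} \<in> \<Union>K} =
        \<Union>((\<lambda>S. {x \<in> topspace T. R `` {x} \<in> S}) ` K)" for K
      by auto
    ultimately show ?thesis
      unfolding istopology_def by (auto intro!: openin_Union)
  qed
  then show ?thesis
    unfolding quotient_topology_def by simp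
qed

lemma equiv_rtrancl_symmetric_closure:
  assumes "r \<subseteq> A \<times> A"
  shows "equiv A ((r \<union> r\<inverse>)\<^sup>* \<inter> A \<times> A)"
proof -
  have "(y, x) \<in> (r \<union> r\<inverse>)\<^sup>*" if "(x, y) \<in> (r \<union> r\<inverse>)\<^sup>*" for x y
    using rtrancl_converseI[OF that] by (simp add: converse_Un sup_commute)
  then show ?thesis
    unfolding equiv_def refl_on_def sym_def trans_def by (blast intro: rtrancl_trans)
qed

lemma openin_preimage_on_open_subset:
  assumes f: "continuous_map (subtopology T S) T' f" and S: "openin T S" and U: "openin T' U"
  shows "openin T {x \<in> S. f x \<in> U}"
proof -
  have "{x \<in> topspace (subtopology T S). f x \<in> U} = {x \<in> S. f x \<in> U}"
    using openin_subset[OF S] by auto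
  then show ?thesis
    using openin_continuous_map_preimage[OF f U] openin_trans_full[OF _ S] by metis
qed

lemma mem_sim_rel_iff:
  "((g, x), (g', x')) \<in> sim_rel M Ob d c cmp X act \<longleftrightarrow>
     (g, x) \<in> Xbar M d X act \<and> (g', x') \<in> Xbar M d X act \<and>
     ((\<exists>h\<in>M. d g' = c h \<and> g = cmp g' h \<and> act h x = Some x') \<or>
      (x = x' \<and> g \<in> Ob \<and> g' \<in> Ob \<and> act g x \<noteq> None \<and> act g' x \<noteq> None))"
  unfolding sim_rel_def by auto

lemma sim_rel_subset_Xbar: "sim_rel M Ob d c cmp X act \<subseteq> Xbar M d X act \<times> Xbar M d X act"
  unfolding sim_rel_def by auto

lemma equiv_simeq_rel: "equiv (Xbar M d X act) (simeq_rel M Ob d c cmp X act)"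
  unfolding simeq_rel_def using sim_rel_subset_Xbar by (rule equiv_rtrancl_symmetric_closure)

lemma sim_rel_subset_simeq_rel: "sim_rel M Ob d c cmp X act \<subseteq> simeq_rel M Ob d c cmp X act"
  unfolding simeq_rel_def using sim_rel_subset_Xbar by blast

context
  fixes M Ob :: "'g set" and d c :: "'g \<Rightarrow> 'g" and cmp :: "'g \<Rightarrow> 'g \<Rightarrow> 'g"
    and X :: "'x set" and act :: "'g \<Rightarrow> 'x \<Rightarrow> 'x option"
  assumes category: "small_category M Ob d c cmp"
    and action: "partial_category_action M Ob d c cmp X act"
begin

lemma objects_subset: "Ob \<subseteq> M"
  and cod_in_objects: "g \<in> M \<Longrightarrow> c g \<in> Ob"
  and dom_object: "e \<in> Ob \<Longrightarrow> d e = e"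
  and comp_cod_left: "g \<in> M \<Longrightarrow> cmp (c g) g = g"
  using category unfolding small_category_def by auto

lemma act_SomeD: "act g x = Some y \<Longrightarrow> g \<in> M \<and> x \<in> X \<and> y \<in> X"
  and act_object_exists: "x \<in> X \<Longrightarrow> \<exists>e\<in>Ob. act e x \<noteq> None"
  and act_object: "e \<in> Ob \<Longrightarrow> act e x \<noteq> None \<Longrightarrow> act e x = Some x"
  and act_dom: "act g x \<noteq> None \<Longrightarrow> act (d g) x \<noteq> None"
  using action unfolding partial_category_action_def by auto

lemma act_comp:
  assumes "g \<in> M" "h \<in> M" "d g = c h" "act h x = Some y"
  shows "act (cmp g h) x = act g y"
  using action assms unfolding partial_category_action_def composable_def by fast

lemma sim_rel_act_eq:
  assumes "((g, x), (g', x')) \<in> sim_rel M Ob d c cmp X act"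
  shows "act g x = act g' x'"
proof -
  have "g' \<in> M" using assms unfolding mem_sim_rel_iff Xbar_def by blast
  with assms show ?thesis
    unfolding mem_sim_rel_iff using act_comp act_object by metis
qed

lemma simeq_rel_act_eq:
  assumes "(p, q) \<in> simeq_rel M Ob d c cmp X act"
  shows "act (fst p) (snd p) = act (fst q) (snd q)"
proof -
  let ?S = "sim_rel M Ob d c cmp X act"
  have "(p, q) \<in> (?S \<union> ?S\<inverse>)\<^sup>*"
    using assms unfolding simeq_rel_def by blast
  then show ?thesis
  proof (induction rule: rtrancl_induct)
    case (step q r)
    then show ?case
      using sim_rel_act_eq[of "fst q" "snd q" "fst r" "snd r"]
        sim_rel_act_eq[of "fst r" "snd r" "fst q" "snd q"]
      by auto
  qed simp
qed

lemma act_Some_simeq_rel: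
  assumes gx: "act g x = Some u" and e: "e \<in> Ob" "act e u \<noteq> None"
  shows "((g, x), (e, u)) \<in> simeq_rel M Ob d c cmp X act"
proof -
  have g: "g \<in> M" and x: "x \<in> X" and u: "u \<in> X"
    using act_SomeD[OF gx] by auto
  have cg: "c g \<in> Ob" "d (c g) = c g"
    using cod_in_objects[OF g] dom_object by auto
  have "act (c g) u = act (cmp (c g) g) x"
    using act_comp[OF _ g _ gx] cg objects_subset by (auto simp: dom_object)
  then have cgu: "act (c g) u = Some u"
    using comp_cod_left[OF g] gx by simp
  have "((g, x), (c g, u)) \<in> sim_rel M Ob d c cmp X act"
    unfolding mem_sim_rel_iff Xbar_def
    using g x u cg cgu gx act_dom comp_cod_left[OF g] objects_subset by auto
  moreover have "((c g, u), (e, u)) \<in> sim_rel M Ob d c cmp X act"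
    unfolding mem_sim_rel_iff Xbar_def
    using u cg cgu e objects_subset dom_object by auto
  moreover have "trans (simeq_rel M Ob d c cmp X act)"
    using equiv_simeq_rel by (rule equivE)
  ultimately show ?thesis
    using sim_rel_subset_simeq_rel by (blast dest: transD)
qed

lemma imap_representative:
  assumes "x \<in> X"
  obtains e where "e \<in> Ob" "act e x \<noteq> None"
    "imap M Ob d c cmp X act x = simeq_rel M Ob d c cmp X act `` {(e, x)}"
proof -
  let ?e = "SOME e. e \<in> Ob \<and> act e x \<noteq> None"
  have "?e \<in> Ob \<and> act ?e x \<noteq> None"
    using act_object_exists[OF assms] by (rule someI2_bex) auto
  then show thesis
    using that unfolding imap_def by blast
qed

lemma Xbar_object:
  assumes "x \<in> X" "e \<in> Ob" "act e x \<noteq> None"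
  shows "(e, x) \<in> Xbar M d X act"
  using assms objects_subset dom_object unfolding Xbar_def by auto

lemma act_graph_subset_Xbar: "act_graph act \<subseteq> Xbar M d X act"
  unfolding act_graph_def Xbar_def using act_SomeD act_dom by fastforce

lemma imap_image_subset_quotient:
  assumes "U \<subseteq> X"
  shows "imap M Ob d c cmp X act ` U \<subseteq> Xbar M d X act // simeq_rel M Ob d c cmp X act"
proof
  fix y assume "y \<in> imap M Ob d c cmp X act ` U"
  then obtain u where "u \<in> X" "y = imap M Ob d c cmp X act u"
    using assms by blast
  then show "y \<in> Xbar M d X act // simeq_rel M Ob d c cmp X act"
    by (metis imap_representative Xbar_object quotientI)
qed

lemma simeq_saturation_imap_image:
  assumes "U \<subseteq> X"
  shows "{p \<in> Xbar M d X act. simeq_rel M Ob d c cmp X act `` {p} \<in> imap M Ob d c cmp X act ` U}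
    = {p \<in> act_graph act. (case p of (g, x) \<Rightarrow> the (act g x)) \<in> U}"
    (is "?L = ?R")
proof (intro equalityI subsetI)
  fix p assume "p \<in> ?L"
  then obtain u where p: "p \<in> Xbar M d X act" and u: "u \<in> U"
    and p_class: "simeq_rel M Ob d c cmp X act `` {p} = imap M Ob d c cmp X act u"
    by blast
  obtain e where e: "e \<in> Ob" "act e u \<noteq> None"
    and "imap M Ob d c cmp X act u = simeq_rel M Ob d c cmp X act `` {(e, u)}"
    using imap_representative assms u by blast
  with p_class have "(p, (e, u)) \<in> simeq_rel M Ob d c cmp X act"
    using eq_equiv_class_iff[OF equiv_simeq_rel p Xbar_object] assms u by blast
  then have "act (fst p) (snd p) = Some u"
    using simeq_rel_act_eq act_object[OF e] by simp
  with u show "p \<in> ?R"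
    unfolding act_graph_def by (auto simp: case_prod_unfold)
next
  fix p assume "p \<in> ?R"
  then obtain g x u where p: "p = (g, x)" and gx: "act g x = Some u" and u: "u \<in> U"
    unfolding act_graph_def by auto
  have "p \<in> Xbar M d X act"
    using act_SomeD[OF gx] act_dom gx unfolding p Xbar_def by auto
  moreover obtain e where e: "e \<in> Ob" "act e u \<noteq> None"
    and "imap M Ob d c cmp X act u = simeq_rel M Ob d c cmp X act `` {(e, u)}"
    using imap_representative assms u by blast
  moreover have "simeq_rel M Ob d c cmp X act `` {p} = simeq_rel M Ob d c cmp X act `` {(e, u)}"
    unfolding p using equiv_class_eq[OF equiv_simeq_rel act_Some_simeq_rel[OF gx e]] .
  ultimately show "p \<in> ?L"
    using u by auto
qed

end

theorem proposition5p6: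
  fixes TG :: "'g topology" and TX :: "'x topology"
    and Ob :: "'g set" and d c :: "'g \<Rightarrow> 'g" and cmp :: "'g \<Rightarrow> 'g \<Rightarrow> 'g"
    and act :: "'g \<Rightarrow> 'x \<Rightarrow> 'x option"
  assumes "topological_category TG Ob d c cmp"
    and "continuous_partial_category_action TG Ob d c cmp TX act"
    and "star_open TG Ob d"
    and "graph_open TG TX act"
  shows "open_map TX (Ytop TG Ob d c cmp TX act)
           (imap (topspace TG) Ob d c cmp (topspace TX) act)"
  unfolding open_map_def
proof (intro allI impI)
  fix U assume U: "openin TX U"
  let ?Xbar = "Xbar (topspace TG) d (topspace TX) act"
  have category: "small_category (topspace TG) Ob d c cmp"
    and action: "partial_category_action (topspace TG) Ob d c cmp (topspace TX) act"
    and act_continuous: "continuous_map (subtopology (prod_topology TG TX) (act_graph act)) TX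
        (\<lambda>(g, x). the (act g x))"
    using assms(1,2) unfolding topological_category_def continuous_partial_category_action_def
    by auto
  have "openin (prod_topology TG TX) {p \<in> act_graph act. (case p of (g, x) \<Rightarrow> the (act g x)) \<in> U}"
    using openin_preimage_on_open_subset[OF act_continuous _ U] assms(4)
    unfolding graph_open_def by blast
  then have "openin (subtopology (prod_topology TG TX) ?Xbar)
      {p \<in> ?Xbar. simeq_rel (topspace TG) Ob d c cmp (topspace TX) act `` {p}
         \<in> imap (topspace TG) Ob d c cmp (topspace TX) act ` U}"
    using simeq_saturation_imap_image[OF category action openin_subset[OF U]]
      act_graph_subset_Xbar[OF category action]
    by (auto intro: subset_openin_subtopology)
  moreover have "topspace (subtopology (prod_topology TG TX) ?Xbar) = ?Xbar"
    unfolding Xbar_def by auto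
  ultimately show "openin (Ytop TG Ob d c cmp TX act)
      (imap (topspace TG) Ob d c cmp (topspace TX) act ` U)"
    unfolding Ytop_def openin_quotient_topology
    using imap_image_subset_quotient[OF category action openin_subset[OF U]] by simp
qed

end
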